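(* Let $z_1\le z_2\le\dots\le z_r$ be real numbers and $\sigma_1,\dots,\sigma_r>0$. For $j=0,\dots,r$ let $$d_j=-\sum_{\ell=1}^j\frac1{\sigma_\ell}+\sum_{\ell=j+1}^r\frac1{\sigma_\ell},\qquad e_j=\sum_{\ell=1}^j\frac{z_\ell}{\sigma_\ell}-\sum_{\ell=j+1}^r\frac{z_\ell}{\sigma_\ell}.$$ Let $m\in\mathbb N$ (including $0$), and for $j=0,\dots,r$ and $k=1,\dots,r$ define $$b_j^k=\begin{cases}\sum_{\ell=0}^m\frac{(-1)^\ell z_k^{m-\ell}\,m!}{d_j^{\ell+1}(m-\ell)!}& d_j\ne0,\\[2pt] z_k^{m+1}/(m+1)& d_j=0.\end{cases}$$ Then $$\int_{\mathbb R}x^m\exp\Big(-\sum_{\ell=1}^r\frac{|x-z_\ell|}{\sigma_\ell}\Big)\,dx=\sum_{\ell=1}^r e^{d_\ell z_\ell+e_\ell}\big(b_{\ell-1}^\ell-b_\ell^\ell\big).$$ *)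

theory Defs
  imports "HOL-Analysis.Analysis"
begin

definition dcoef :: "nat \<Rightarrow> (nat \<Rightarrow> real) \<Rightarrow> nat \<Rightarrow> real" where
  "dcoef r \<sigma> j = - (\<Sum>l=1..j. 1 / \<sigma> l) + (\<Sum>l=j+1..r. 1 / \<sigma> l)"

definition ecoef :: "nat \<Rightarrow> (nat \<Rightarrow> real) \<Rightarrow> (nat \<Rightarrow> real) \<Rightarrow> nat \<Rightarrow> real" where
  "ecoef r z \<sigma> j = (\<Sum>l=1..j. z l / \<sigma> l) - (\<Sum>l=j+1..r. z l / \<sigma> l)"

definition bcoef :: "nat \<Rightarrow> (nat \<Rightarrow> real) \<Rightarrow> (nat \<Rightarrow> real) \<Rightarrow> nat \<Rightarrow> nat \<Rightarrow> nat \<Rightarrow> real" where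
  "bcoef r z \<sigma> m j k =
     (if dcoef r \<sigma> j \<noteq> 0
      then (\<Sum>l=0..m. (-1) ^ l * z k ^ (m - l) * fact m / (dcoef r \<sigma> j ^ (l + 1) * fact (m - l)))
      else z k ^ (m + 1) / real (m + 1))"

end

theory Submission
  imports Defs "HOL-Real_Asymp.Real_Asymp"
begin

(* On the j-th interval between consecutive breakpoints z_l the exponent is affine, namely
   d_j x + e_j, so there the integrand has the antiderivative exp (d_j x + e_j) P(x), where P is
   the paper's b_j^k with z_k replaced by x.  Since d_0 > 0 and d_r < 0, the outermost
   antiderivatives vanish at -\<infinity> and +\<infinity>, and summing the fundamental theorem of calculus
   over the intervals leaves only the jumps between neighbouring antiderivatives at the z_l.
   The two exponents agree at z_l, which produces the common factor exp (d_l z_l + e_l). *)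

definition pow_exp_prim_factor :: "nat \<Rightarrow> real \<Rightarrow> real \<Rightarrow> real" where
  "pow_exp_prim_factor m d x =
     (if d \<noteq> 0 then (\<Sum>l=0..m. (-1) ^ l * x ^ (m - l) * fact m / (d ^ (l + 1) * fact (m - l)))
      else x ^ (m + 1) / real (m + 1))"

definition pow_exp_prim :: "nat \<Rightarrow> real \<Rightarrow> real \<Rightarrow> real \<Rightarrow> real" where
  "pow_exp_prim m d e x = exp (d * x + e) * pow_exp_prim_factor m d x"

lemma pow_exp_prim_factor_Suc:
  assumes "d \<noteq> 0"
  shows "pow_exp_prim_factor (Suc m) d x = (x ^ Suc m - Suc m * pow_exp_prim_factor m d x) / d"
proof -
  let ?t = "\<lambda>m l. (-1) ^ l * x ^ (m - l) * fact m / (d ^ (l + 1) * fact (m - l))"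
  have "(\<Sum>l=0..Suc m. ?t (Suc m) l) = ?t (Suc m) 0 + (\<Sum>l=0..m. ?t (Suc m) (Suc l))"
    unfolding sum.atLeast0_atMost_Suc_shift comp_def ..
  also have "(\<Sum>l=0..m. ?t (Suc m) (Suc l)) = - (Suc m / d) * (\<Sum>l=0..m. ?t m l)"
    unfolding sum_distrib_left by (rule sum.cong) (use assms in \<open>auto simp: field_simps\<close>)
  finally show ?thesis
    using assms by (simp add: pow_exp_prim_factor_def diff_divide_distrib)
qed

lemma pow_exp_prim_factor_has_derivative:
  assumes "d \<noteq> 0"
  shows "(pow_exp_prim_factor m d has_real_derivative x ^ m - d * pow_exp_prim_factor m d x) (at x)"
proof (induction m arbitrary: x)
  case 0
  then show ?case
    using assms by (simp add: pow_exp_prim_factor_def)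
next
  case (Suc m)
  have "((\<lambda>x. x ^ Suc m) has_real_derivative Suc m * x ^ m) (at x)"
    using DERIV_pow[of "Suc m" x] by simp
  then have "((\<lambda>x. (x ^ Suc m - Suc m * pow_exp_prim_factor m d x) / d) has_real_derivative
          (Suc m * x ^ m - Suc m * (x ^ m - d * pow_exp_prim_factor m d x)) / d) (at x)"
    by (intro DERIV_cdivide DERIV_diff DERIV_cmult Suc.IH)
  then show ?case
    using assms by (simp add: pow_exp_prim_factor_Suc field_simps)
qed

lemma pow_exp_prim_has_derivative:
  "(pow_exp_prim m d e has_real_derivative x ^ m * exp (d * x + e)) (at x)"
proof (cases "d = 0")
  case True
  have "((\<lambda>x. x ^ (m + 1)) has_real_derivative (m + 1) * x ^ m) (at x)"
    using DERIV_pow[of "m + 1" x] by simp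
  then have "((\<lambda>x. exp e * (x ^ (m + 1) / real (m + 1))) has_real_derivative
          exp e * ((m + 1) * x ^ m / real (m + 1))) (at x)"
    by (intro DERIV_cmult DERIV_cdivide)
  moreover have "pow_exp_prim m d e = (\<lambda>x. exp e * (x ^ (m + 1) / real (m + 1)))"
    using True by (simp add: fun_eq_iff pow_exp_prim_def pow_exp_prim_factor_def)
  ultimately show ?thesis
    using True by (simp add: mult.commute)
next
  case False
  have "(pow_exp_prim m d e has_real_derivative
          exp (d * x + e) * d * pow_exp_prim_factor m d x
          + exp (d * x + e) * (x ^ m - d * pow_exp_prim_factor m d x)) (at x)"
    unfolding pow_exp_prim_def[abs_def]
    by (auto intro!: derivative_eq_intros pow_exp_prim_factor_has_derivative False)
  then show ?thesis
    by (simp add: algebra_simps)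
qed

lemma isCont_pow_exp_prim: "isCont (pow_exp_prim m d e) x"
  using pow_exp_prim_has_derivative by (rule DERIV_isCont)

lemma pow_exp_prim_as_sum:
  assumes "d \<noteq> 0"
  shows "pow_exp_prim m d e x =
    (\<Sum>l=0..m. (-1) ^ l * fact m / (d ^ (l + 1) * fact (m - l)) * x ^ (m - l) * exp (d * x + e))"
  using assms by (auto simp: pow_exp_prim_def pow_exp_prim_factor_def sum_distrib_left intro!: sum.cong)

lemma pow_exp_prim_tendsto_at_top:
  assumes "d < 0"
  shows "(pow_exp_prim m d e \<longlongrightarrow> 0) at_top"
  unfolding pow_exp_prim_as_sum[OF assms[THEN less_imp_neq]]
  by (intro tendsto_null_sum) (use assms in real_asymp)

lemma pow_exp_prim_tendsto_at_bot:
  assumes "d > 0"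
  shows "(pow_exp_prim m d e \<longlongrightarrow> 0) at_bot"
  unfolding pow_exp_prim_as_sum[OF assms[THEN less_imp_neq, THEN not_sym]]
  by (intro tendsto_null_sum) (use assms in real_asymp)

lemma set_integrable_pow_exp_Iio:
  fixes c d e :: real
  assumes d: "d > 0"
  shows "set_integrable lborel {..<c} (\<lambda>x. x ^ m * exp (d * x + e))"
proof -
  let ?g = "\<lambda>x. x ^ m * exp (d * x + e)"
  define c0 where "c0 = min c 0"
  \<comment> \<open>The FTC for improper integrals needs a nonnegative integrand; x ^ m has sign (-1) ^ m for x < 0.\<close>
  have "set_integrable lborel (einterval (-\<infinity>) (ereal c0)) (\<lambda>x. (-1) ^ m * ?g x)"
  proof (rule interval_integral_FTC_nonneg(1)
      [where F = "\<lambda>x. (-1) ^ m * pow_exp_prim m d e x" and A = 0])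
    show "DERIV (\<lambda>x. (-1) ^ m * pow_exp_prim m d e x) x :> (-1) ^ m * ?g x" for x
      by (intro DERIV_cmult pow_exp_prim_has_derivative)
    show "AE x in lborel. - \<infinity> < ereal x \<longrightarrow> ereal x < ereal c0 \<longrightarrow> 0 \<le> (-1) ^ m * ?g x"
    proof (intro AE_I2 impI)
      fix x
      assume "ereal x < ereal c0"
      then have "0 \<le> (-x) ^ m * exp (d * x + e)"
        by (simp add: c0_def)
      then show "0 \<le> (-1) ^ m * ?g x"
        by (simp only: power_minus[of x m] mult.assoc)
    qed
    show "(((\<lambda>x. (-1) ^ m * pow_exp_prim m d e x) \<circ> real_of_ereal) \<longlongrightarrow> 0) (at_right (- \<infinity>))"
      unfolding ereal_tendsto_simps
      using tendsto_mult_right_zero[OF pow_exp_prim_tendsto_at_bot[OF d]] by simp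
    show "(((\<lambda>x. (-1) ^ m * pow_exp_prim m d e x) \<circ> real_of_ereal) \<longlongrightarrow>
            (-1) ^ m * pow_exp_prim m d e c0) (at_left (ereal c0))"
      unfolding ereal_tendsto_simps
      by (intro tendsto_intros isCont_tendsto_compose[OF isCont_pow_exp_prim] tendsto_ident_at)
  qed auto
  then have "set_integrable lborel {..<c0} ?g"
    by simp
  moreover have "set_integrable lborel {c0..c} ?g"
    by (intro borel_integrable_atLeastAtMost' continuous_intros)
  ultimately have "set_integrable lborel ({..<c0} \<union> {c0..c}) ?g"
    by (rule set_integrable_Un) auto
  then show ?thesis
    by (rule set_integrable_subset) (auto simp: c0_def)
qed

lemma set_integrable_pow_exp_Ioi:
  fixes c d e :: real
  assumes d: "d < 0"
  shows "set_integrable lborel {c<..} (\<lambda>x. x ^ m * exp (d * x + e))"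
proof -
  let ?g = "\<lambda>x. x ^ m * exp (d * x + e)"
  define c0 where "c0 = max c 0"
  have "set_integrable lborel (einterval (ereal c0) \<infinity>) ?g"
  proof (rule interval_integral_FTC_nonneg(1)[where F = "pow_exp_prim m d e" and B = 0])
    show "DERIV (pow_exp_prim m d e) x :> ?g x" for x
      by (rule pow_exp_prim_has_derivative)
    show "AE x in lborel. ereal c0 < ereal x \<longrightarrow> ereal x < \<infinity> \<longrightarrow> 0 \<le> ?g x"
      by (intro AE_I2) (auto simp: c0_def)
    show "((pow_exp_prim m d e \<circ> real_of_ereal) \<longlongrightarrow> 0) (at_left \<infinity>)"
      unfolding ereal_tendsto_simps using pow_exp_prim_tendsto_at_top[OF d] .
    show "((pow_exp_prim m d e \<circ> real_of_ereal) \<longlongrightarrow> pow_exp_prim m d e c0) (at_right (ereal c0))"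
      unfolding ereal_tendsto_simps
      by (intro isCont_tendsto_compose[OF isCont_pow_exp_prim] tendsto_ident_at)
  qed auto
  then have "set_integrable lborel {c0<..} ?g"
    by simp
  moreover have "set_integrable lborel {c..c0} ?g"
    by (intro borel_integrable_atLeastAtMost' continuous_intros)
  ultimately have "set_integrable lborel ({c..c0} \<union> {c0<..}) ?g"
    by (intro set_integrable_Un) auto
  then show ?thesis
    by (rule set_integrable_subset) (auto simp: c0_def)
qed

lemma integrable_lborel_of_tails:
  fixes f :: "real \<Rightarrow> real"
  assumes "\<And>x. isCont f x" "set_integrable lborel {..<a} f" "set_integrable lborel {b<..} f"
  shows "integrable lborel f"
proof -
  have "set_integrable lborel {a..b} f"
    using assms(1) by (intro borel_integrable_atLeastAtMost' continuous_at_imp_continuous_on) auto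
  then have "set_integrable lborel ({..<a} \<union> {a..b} \<union> {b<..}) f"
    using assms(2,3) by (intro set_integrable_Un) auto
  moreover have "{..<a} \<union> {a..b} \<union> {b<..} = UNIV"
    by auto
  ultimately show ?thesis
    by (simp add: set_integrable_def)
qed

lemma interval_integral_FTC_Icc:
  fixes f G :: "real \<Rightarrow> real"
  assumes "a \<le> b"
    and G_deriv: "\<And>x. a \<le> x \<Longrightarrow> x \<le> b \<Longrightarrow> (G has_real_derivative f x) (at x)"
    and f_cont: "\<And>x. a \<le> x \<Longrightarrow> x \<le> b \<Longrightarrow> isCont f x"
  shows "(LBINT x=ereal a..ereal b. f x) = G b - G a"
proof (rule interval_integral_FTC_finite)
  show "continuous_on {min a b..max a b} f"
    using \<open>a \<le> b\<close> by (intro continuous_at_imp_continuous_on ballI f_cont) auto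
  fix x
  assume "min a b \<le> x" "x \<le> max a b"
  with \<open>a \<le> b\<close> have "(G has_vector_derivative f x) (at x)"
    by (simp add: G_deriv flip: has_real_derivative_iff_has_vector_derivative)
  then show "(G has_vector_derivative f x) (at x within {min a b..max a b})"
    by (rule has_vector_derivative_at_within)
qed

lemma interval_lebesgue_integrable_lborel:
  fixes f :: "real \<Rightarrow> 'a::{banach, second_countable_topology}"
  assumes "integrable lborel f"
  shows "interval_lebesgue_integrable lborel a b f"
  unfolding interval_lebesgue_integrable_def set_integrable_def
  using integrable_mult_indicator[OF _ assms] by (simp add: borel_einterval)

lemma interval_integral_FTC_Iic:
  fixes f G :: "real \<Rightarrow> real"
  assumes G_deriv: "\<And>x. x \<le> b \<Longrightarrow> (G has_real_derivative f x) (at x)"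
    and f_cont: "\<And>x. x < b \<Longrightarrow> isCont f x" and f_int: "set_integrable lborel {..<b} f"
    and G_bot: "(G \<longlongrightarrow> 0) at_bot"
  shows "(LBINT x=-\<infinity>..ereal b. f x) = G b"
proof -
  have "(LBINT x=-\<infinity>..ereal b. f x) = G b - 0"
  proof (rule interval_integral_FTC_integrable)
    show "((G \<circ> real_of_ereal) \<longlongrightarrow> 0) (at_right (-\<infinity>))"
      unfolding ereal_tendsto_simps by (rule G_bot)
    show "((G \<circ> real_of_ereal) \<longlongrightarrow> G b) (at_left (ereal b))"
      unfolding ereal_tendsto_simps
      by (intro isCont_tendsto_compose[OF DERIV_isCont[OF G_deriv]] tendsto_ident_at) simp
  qed (use f_int in \<open>auto simp flip: has_real_derivative_iff_has_vector_derivative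
                         intro: G_deriv f_cont\<close>)
  then show ?thesis
    by simp
qed

lemma interval_integral_FTC_Ici:
  fixes f G :: "real \<Rightarrow> real"
  assumes G_deriv: "\<And>x. a \<le> x \<Longrightarrow> (G has_real_derivative f x) (at x)"
    and f_cont: "\<And>x. a < x \<Longrightarrow> isCont f x" and f_int: "set_integrable lborel {a<..} f"
    and G_top: "(G \<longlongrightarrow> 0) at_top"
  shows "(LBINT x=ereal a..\<infinity>. f x) = - G a"
proof -
  have "(LBINT x=ereal a..\<infinity>. f x) = 0 - G a"
  proof (rule interval_integral_FTC_integrable)
    show "((G \<circ> real_of_ereal) \<longlongrightarrow> 0) (at_left \<infinity>)"
      unfolding ereal_tendsto_simps by (rule G_top)
    show "((G \<circ> real_of_ereal) \<longlongrightarrow> G a) (at_right (ereal a))"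
      unfolding ereal_tendsto_simps
      by (intro isCont_tendsto_compose[OF DERIV_isCont[OF G_deriv]] tendsto_ident_at) simp
  qed (use f_int in \<open>auto simp flip: has_real_derivative_iff_has_vector_derivative
                         intro: G_deriv f_cont\<close>)
  then show ?thesis
    by simp
qed

definition piece :: "nat \<Rightarrow> (nat \<Rightarrow> real) \<Rightarrow> nat \<Rightarrow> real set" where
  "piece r p j = {x. (j = 0 \<or> p j \<le> x) \<and> (j = r \<or> x \<le> p (Suc j))}"

lemma lborel_integral_piecewise_FTC:
  fixes f :: "real \<Rightarrow> real" and G :: "nat \<Rightarrow> real \<Rightarrow> real" and p :: "nat \<Rightarrow> real"
  assumes "1 \<le> r"
    and p_mono: "\<And>i j. 1 \<le> i \<Longrightarrow> i \<le> j \<Longrightarrow> j \<le> r \<Longrightarrow> p i \<le> p j"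
    and f_cont: "\<And>x. isCont f x" and f_int: "integrable lborel f"
    and G_deriv: "\<And>j x. j \<le> r \<Longrightarrow> x \<in> piece r p j \<Longrightarrow> (G j has_real_derivative f x) (at x)"
    and G_bot: "(G 0 \<longlongrightarrow> 0) at_bot" and G_top: "(G r \<longlongrightarrow> 0) at_top"
  shows "integral\<^sup>L lborel f = (\<Sum>l=1..r. G (l - 1) (p l) - G l (p l))"
proof -
  define C where "C j = (\<Sum>l=1..j. G (l - 1) (p l) - G l (p l))" for j
  have f_int_on: "set_integrable lborel A f" if "A \<in> sets lborel" for A
    unfolding set_integrable_def using integrable_mult_indicator[OF that f_int] .
  have lower: "(LBINT x=-\<infinity>..ereal (p 1). f x) = G 0 (p 1)"
    using \<open>1 \<le> r\<close>
    by (intro interval_integral_FTC_Iic G_deriv f_cont f_int_on G_bot) (auto simp: piece_def)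
  have upper: "(LBINT x=ereal (p r)..\<infinity>. f x) = - G r (p r)"
    using \<open>1 \<le> r\<close>
    by (intro interval_integral_FTC_Ici G_deriv f_cont f_int_on G_top) (auto simp: piece_def)
  have middle: "(LBINT x=ereal (p j)..ereal (p (Suc j)). f x) = G j (p (Suc j)) - G j (p j)"
    if "1 \<le> j" "j < r" for j
    using that p_mono[of j "Suc j"]
    by (intro interval_integral_FTC_Icc G_deriv f_cont) (auto simp: piece_def)
  have below: "(LBINT x=-\<infinity>..ereal (p j). f x) = C j + G j (p j)" if "1 \<le> j" "j \<le> r" for j
    using that
  proof (induction j rule: nat_induct_at_least)
    case base
    then show ?case
      using lower by (simp add: C_def)
  next
    case (Suc j)
    have "(LBINT x=-\<infinity>..ereal (p (Suc j)). f x)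
        = (LBINT x=-\<infinity>..ereal (p j). f x) + (LBINT x=ereal (p j)..ereal (p (Suc j)). f x)"
      by (rule interval_integral_sum[symmetric]) (rule interval_lebesgue_integrable_lborel[OF f_int])
    then show ?case
      using Suc middle by (simp add: C_def)
  qed
  have "integral\<^sup>L lborel f = (LBINT x=-\<infinity>..\<infinity>. f x)"
    by (simp add: interval_lebesgue_integral_def set_lebesgue_integral_def)
  also have "\<dots> = (LBINT x=-\<infinity>..ereal (p r). f x) + (LBINT x=ereal (p r)..\<infinity>. f x)"
    by (rule interval_integral_sum[symmetric]) (rule interval_lebesgue_integrable_lborel[OF f_int])
  also have "\<dots> = C r"
    using below[of r] upper \<open>1 \<le> r\<close> by simp
  finally show ?thesis
    by (simp add: C_def)
qed

lemma sum_abs_dist_on_piece: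
  fixes z \<sigma> :: "nat \<Rightarrow> real"
  assumes mono: "\<And>i j. 1 \<le> i \<Longrightarrow> i \<le> j \<Longrightarrow> j \<le> r \<Longrightarrow> z i \<le> z j"
    and j: "j \<le> r" and x: "x \<in> piece r z j"
  shows "(\<Sum>l=1..r. \<bar>x - z l\<bar> / \<sigma> l) = - (dcoef r \<sigma> j * x + ecoef r z \<sigma> j)"
proof -
  have left: "z l \<le> x" if "l \<in> {1..j}" for l
    using mono[of l j] that j x by (force simp: piece_def)
  have right: "x \<le> z l" if "l \<in> {j+1..r}" for l
    using mono[of "Suc j" l] that x by (force simp: piece_def)
  have "{1..r} = {1..j} \<union> {j+1..r}"
    using j by auto
  then have "(\<Sum>l=1..r. \<bar>x - z l\<bar> / \<sigma> l)
      = (\<Sum>l=1..j. \<bar>x - z l\<bar> / \<sigma> l) + (\<Sum>l=j+1..r. \<bar>x - z l\<bar> / \<sigma> l)"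
    by (simp add: sum.union_disjoint)
  also have "\<dots> = (\<Sum>l=1..j. x * (1 / \<sigma> l) - z l / \<sigma> l) + (\<Sum>l=j+1..r. z l / \<sigma> l - x * (1 / \<sigma> l))"
    using left right by (intro arg_cong2[where f = "(+)"] sum.cong) (auto simp: diff_divide_distrib)
  finally show ?thesis
    by (simp add: dcoef_def ecoef_def sum_subtractf sum_distrib_left algebra_simps)
qed

lemma dcoef_ecoef_agree_at_breakpoint:
  assumes "1 \<le> l" "l \<le> r"
  shows "dcoef r \<sigma> (l - 1) * z l + ecoef r z \<sigma> (l - 1) = dcoef r \<sigma> l * z l + ecoef r z \<sigma> l"
proof -
  obtain k where k: "l = Suc k"
    using assms(1) by (cases l) auto
  have split: "(\<Sum>i=k+1..r. g i) = g (Suc k) + (\<Sum>i=Suc k+1..r. g i)" for g :: "nat \<Rightarrow> real"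
    using assms(2) k by (simp add: sum.atLeast_Suc_atMost)
  show ?thesis
    unfolding k diff_Suc_1 dcoef_def ecoef_def split by (simp add: algebra_simps)
qed

lemma pow_exp_prim_jump_eq_bcoef:
  assumes "1 \<le> l" "l \<le> r"
  shows "pow_exp_prim m (dcoef r \<sigma> (l - 1)) (ecoef r z \<sigma> (l - 1)) (z l)
           - pow_exp_prim m (dcoef r \<sigma> l) (ecoef r z \<sigma> l) (z l)
         = exp (dcoef r \<sigma> l * z l + ecoef r z \<sigma> l) * (bcoef r z \<sigma> m (l - 1) l - bcoef r z \<sigma> m l l)"
  using dcoef_ecoef_agree_at_breakpoint[OF assms]
  by (simp add: pow_exp_prim_def pow_exp_prim_factor_def bcoef_def right_diff_distrib)

lemma dcoef_first_pos:
  assumes "1 \<le> r" and "\<And>l. 1 \<le> l \<Longrightarrow> l \<le> r \<Longrightarrow> \<sigma> l > 0"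
  shows "dcoef r \<sigma> 0 > 0"
  using assms by (auto simp: dcoef_def intro!: sum_pos)

lemma dcoef_last_neg:
  assumes "1 \<le> r" and "\<And>l. 1 \<le> l \<Longrightarrow> l \<le> r \<Longrightarrow> \<sigma> l > 0"
  shows "dcoef r \<sigma> r < 0"
  using assms by (auto simp: dcoef_def intro!: sum_pos)

theorem mainTheorem6:
  fixes r m :: nat and z \<sigma> :: "nat \<Rightarrow> real"
  assumes "r \<ge> 1"
    and "\<And>i j. 1 \<le> i \<Longrightarrow> i \<le> j \<Longrightarrow> j \<le> r \<Longrightarrow> z i \<le> z j"
    and "\<And>l. 1 \<le> l \<Longrightarrow> l \<le> r \<Longrightarrow> \<sigma> l > 0"
  shows "(LINT x|lborel. x ^ m * exp (- (\<Sum>l=1..r. \<bar>x - z l\<bar> / \<sigma> l)))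
         = (\<Sum>l=1..r. exp (dcoef r \<sigma> l * z l + ecoef r z \<sigma> l)
                        * (bcoef r z \<sigma> m (l - 1) l - bcoef r z \<sigma> m l l))"
proof -
  note r = assms(1) and mono = assms(2) and \<sigma>_pos = assms(3)
  define f where "f = (\<lambda>x. x ^ m * exp (- (\<Sum>l=1..r. \<bar>x - z l\<bar> / \<sigma> l)))"
  define G where "G j = pow_exp_prim m (dcoef r \<sigma> j) (ecoef r z \<sigma> j)" for j
  have f_piece: "f x = x ^ m * exp (dcoef r \<sigma> j * x + ecoef r z \<sigma> j)"
    if "j \<le> r" "x \<in> piece r z j" for j x
    using sum_abs_dist_on_piece[OF mono that] by (simp add: f_def)
  have f_cont: "isCont f x" for x
    unfolding f_def by (intro continuous_intros) (use \<sigma>_pos in force)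
  have "set_integrable lborel {..<z 1} f"
    using set_integrable_pow_exp_Iio[OF dcoef_first_pos[OF r \<sigma>_pos]]
    by (rule set_integrable_cong[THEN iffD1, rotated -1])
       (use r in \<open>auto simp: f_piece[of 0] piece_def\<close>)
  moreover have "set_integrable lborel {z r<..} f"
    using set_integrable_pow_exp_Ioi[OF dcoef_last_neg[OF r \<sigma>_pos]]
    by (rule set_integrable_cong[THEN iffD1, rotated -1])
       (use r in \<open>auto simp: f_piece[of r] piece_def\<close>)
  ultimately have "integrable lborel f"
    by (rule integrable_lborel_of_tails[OF f_cont])
  then have "integral\<^sup>L lborel f = (\<Sum>l=1..r. G (l - 1) (z l) - G l (z l))"
    using pow_exp_prim_tendsto_at_bot[OF dcoef_first_pos[OF r \<sigma>_pos]]
      pow_exp_prim_tendsto_at_top[OF dcoef_last_neg[OF r \<sigma>_pos]]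
    by (intro lborel_integral_piecewise_FTC[OF r mono f_cont])
       (auto simp: G_def f_piece intro: pow_exp_prim_has_derivative)
  also have "\<dots> = (\<Sum>l=1..r. exp (dcoef r \<sigma> l * z l + ecoef r z \<sigma> l)
                        * (bcoef r z \<sigma> m (l - 1) l - bcoef r z \<sigma> m l l))"
    unfolding G_def by (rule sum.cong[OF refl], rule pow_exp_prim_jump_eq_bcoef) auto
  finally show ?thesis
    by (simp add: f_def)
qed

end
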